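(* The generating function $$F_{(213,231)}(x,p,q,u,v,s,t)=\sum_{n\ge0}\ \sum_{\pi\in S_n(213,231)} x^n p^{\operatorname{asc}(\pi)}q^{\operatorname{des}(\pi)}u^{\operatorname{lrmax}(\pi)}v^{\operatorname{rlmax}(\pi)}s^{\operatorname{lrmin}(\pi)}t^{\operatorname{rlmin}(\pi)}$$ is equal to $\dfrac{A}{(1-ptux)(1-ptx-qvx)(1-qsvx)}$, where $$\begin{aligned}A={}&1 - p t x - p t u x - q v x - q s v x + s t u v x + p^2 t^2 u x^2 + p q s t v x^2 + p q t u v x^2 + p q s t u v x^2 - p s t^2 u v x^2 + q^2 s v^2 x^2\\ &- q s t u v^2 x^2 - p^2 q s t^2 u v x^3 - p q^2 s t u v^2 x^3 + p q s^2 t^2 u v^2 x^3 + p q s t^2 u^2 v^2 x^3 - p q s^2 t^2 u^2 v^2 x^3.\end{aligned}$$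
   Context: For $n\ge 0$, $S_n$ denotes the set of permutations $\pi=\pi_1\cdots\pi_n$ of $[n]=\{1,\dots,n\}$ ($S_0$ consists of the empty permutation, for which all statistics are $0$). $\pi$ avoids a pattern $\tau\in S_k$ if no subsequence $\pi_{i_1}\cdots\pi_{i_k}$ ($i_1<\dots<i_k$) satisfies $\pi_{i_a}<\pi_{i_b}\iff\tau_a<\tau_b$; $S_n(\tau,\rho)$ is the set of permutations in $S_n$ avoiding both $\tau$ and $\rho$. $\operatorname{asc}(\pi)$ (resp. $\operatorname{des}(\pi)$) is the number of $i\in[n-1]$ with $\pi_i<\pi_{i+1}$ (resp. $\pi_i>\pi_{i+1}$). $\pi_i$ is a left-to-right maximum (resp. minimum) if it is larger (resp. smaller) than every $\pi_j$ with $j<i$, and a right-to-left maximum (resp. minimum) if it is larger (resp. smaller) than every $\pi_j$ with $j>i$; $\operatorname{lrmax},\operatorname{lrmin},\operatorname{rlmax},\operatorname{rlmin}$ count these. *)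

theory Defs
  imports "HOL-Combinatorics.Multiset_Permutations" "HOL-Library.Sublist"
          "HOL-Computational_Algebra.Formal_Power_Series"
begin

text \<open>Permutations of [n] are represented as lists pi_1 ... pi_n (one-line notation);
  list positions are 0-based.\<close>

definition contains_pattern :: "nat list \<Rightarrow> nat list \<Rightarrow> bool" where
  "contains_pattern \<pi> \<tau> \<longleftrightarrow>
     (\<exists>\<sigma>. subseq \<sigma> \<pi> \<and> length \<sigma> = length \<tau> \<and>
        (\<forall>a<length \<tau>. \<forall>b<length \<tau>. (\<sigma>!a < \<sigma>!b \<longleftrightarrow> \<tau>!a < \<tau>!b)))"

definition avoids :: "nat list \<Rightarrow> nat list \<Rightarrow> bool" where
  "avoids \<pi> \<tau> \<longleftrightarrow> \<not> contains_pattern \<pi> \<tau>"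

definition Av2 :: "nat \<Rightarrow> nat list \<Rightarrow> nat list \<Rightarrow> nat list set" where
  "Av2 n \<tau> \<rho> = {\<pi> \<in> permutations_of_set {1..n}. avoids \<pi> \<tau> \<and> avoids \<pi> \<rho>}"

definition asc :: "nat list \<Rightarrow> nat" where
  "asc \<pi> = card {i. Suc i < length \<pi> \<and> \<pi>!i < \<pi>!(Suc i)}"

definition des :: "nat list \<Rightarrow> nat" where
  "des \<pi> = card {i. Suc i < length \<pi> \<and> \<pi>!i > \<pi>!(Suc i)}"

definition lrmax :: "nat list \<Rightarrow> nat" where
  "lrmax \<pi> = card {i. i < length \<pi> \<and> (\<forall>j<i. \<pi>!j < \<pi>!i)}"

definition lrmin :: "nat list \<Rightarrow> nat" where
  "lrmin \<pi> = card {i. i < length \<pi> \<and> (\<forall>j<i. \<pi>!j > \<pi>!i)}"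

definition rlmax :: "nat list \<Rightarrow> nat" where
  "rlmax \<pi> = card {i. i < length \<pi> \<and> (\<forall>j. i < j \<and> j < length \<pi> \<longrightarrow> \<pi>!j < \<pi>!i)}"

definition rlmin :: "nat list \<Rightarrow> nat" where
  "rlmin \<pi> = card {i. i < length \<pi> \<and> (\<forall>j. i < j \<and> j < length \<pi> \<longrightarrow> \<pi>!j > \<pi>!i)}"

end

theory Submission
  imports Defs
begin

(*
  A permutation avoids 213 and 231 exactly when each entry is the largest or the smallest of
  itself and the entries to its right. So such a permutation of an n-set (n >= 2) is its maximum
  or its minimum followed by such a permutation of the remaining set. Prepending the maximum adds
  a descent, a right-to-left maximum and a left-to-right minimum, and leaves the new first entry
  as the only left-to-right maximum; prepending the minimum is dual. For the generating function
  F(u,s) this gives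
    F(u,s) - 1 = uvst x + x (quvs (F(1,s) - 1) + pust (F(u,1) - 1)),
  and the instances at (1,1), (1,s), (u,1), (u,s) form a triangular linear system whose
  solution is the stated rational function.
*)

fun suffix_extremal :: "nat list \<Rightarrow> bool" where
  "suffix_extremal [] \<longleftrightarrow> True"
| "suffix_extremal (x # xs) \<longleftrightarrow>
     ((\<forall>y\<in>set xs. y < x) \<or> (\<forall>y\<in>set xs. x < y)) \<and> suffix_extremal xs"

lemma contains_pattern_length3:
  assumes "length \<tau> = 3"
  shows "contains_pattern \<pi> \<tau> \<longleftrightarrow>
     (\<exists>x y z. subseq [x, y, z] \<pi> \<and> (\<forall>i<3. \<forall>j<3. [x, y, z]!i < [x, y, z]!j \<longleftrightarrow> \<tau>!i < \<tau>!j))"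
    (is "_ \<longleftrightarrow> (\<exists>x y z. ?P [x, y, z])")
proof
  assume "contains_pattern \<pi> \<tau>"
  then obtain \<sigma> where "length \<sigma> = 3" "?P \<sigma>"
    unfolding contains_pattern_def assms by blast
  moreover from \<open>length \<sigma> = 3\<close> obtain x y z where "\<sigma> = [x, y, z]"
    by (metis (no_types) length_0_conv length_Suc_conv numeral_3_eq_3)
  ultimately show "\<exists>x y z. ?P [x, y, z]" by blast
next
  assume "\<exists>x y z. ?P [x, y, z]"
  then obtain x y z where "?P [x, y, z]" by blast
  then show "contains_pattern \<pi> \<tau>"
    unfolding contains_pattern_def assms by (intro exI[of _ "[x, y, z]"]) simp
qed

lemma contains_213_iff:
  "contains_pattern \<pi> [2,1,3] \<longleftrightarrow> (\<exists>x y z. subseq [x, y, z] \<pi> \<and> y < x \<and> x < z)"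
proof -
  have "(\<forall>i<3. \<forall>j<3. [x, y, z]!i < [x, y, z]!j \<longleftrightarrow> [2,1,3::nat]!i < [2,1,3]!j) \<longleftrightarrow> y < x \<and> x < z"
    for x y z :: nat
    by (auto simp: All_less_Suc numeral_3_eq_3)
  then show ?thesis by (simp add: contains_pattern_length3)
qed

lemma contains_231_iff:
  "contains_pattern \<pi> [2,3,1] \<longleftrightarrow> (\<exists>x y z. subseq [x, y, z] \<pi> \<and> z < x \<and> x < y)"
proof -
  have "(\<forall>i<3. \<forall>j<3. [x, y, z]!i < [x, y, z]!j \<longleftrightarrow> [2,3,1::nat]!i < [2,3,1]!j) \<longleftrightarrow> z < x \<and> x < y"
    for x y z :: nat
    by (auto simp: All_less_Suc numeral_3_eq_3)
  then show ?thesis by (simp add: contains_pattern_length3)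
qed

lemma subseq_pair_or_swap:
  "y \<in> set xs \<Longrightarrow> z \<in> set xs \<Longrightarrow> y \<noteq> z \<Longrightarrow> subseq [y, z] xs \<or> subseq [z, y] xs"
  by (induction xs) (auto simp: subseq_singleton_left)

lemma subseq_set_subset: "subseq xs ys \<Longrightarrow> set xs \<subseteq> set ys"
  by (auto elim: list_emb_set)

lemma subseq_triple_Cons:
  "subseq [a, b, c] (x # xs) \<longleftrightarrow> subseq [a, b, c] xs \<or> (a = x \<and> subseq [b, c] xs)"
  by (auto dest: subseq_Cons')

lemma extremal_iff_no_straddling_pair:
  fixes x :: "'a::linorder"
  assumes "x \<notin> set xs"
  shows "((\<forall>y\<in>set xs. y < x) \<or> (\<forall>y\<in>set xs. x < y)) \<longleftrightarrow>
    \<not> (\<exists>y z. subseq [y, z] xs \<and> (y < x \<and> x < z \<or> z < x \<and> x < y))"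
proof
  assume extremal: "(\<forall>y\<in>set xs. y < x) \<or> (\<forall>y\<in>set xs. x < y)"
  show "\<not> (\<exists>y z. subseq [y, z] xs \<and> (y < x \<and> x < z \<or> z < x \<and> x < y))"
  proof
    assume "\<exists>y z. subseq [y, z] xs \<and> (y < x \<and> x < z \<or> z < x \<and> x < y)"
    then obtain y z where "y \<in> set xs" "z \<in> set xs" "y < x \<and> x < z \<or> z < x \<and> x < y"
      by (fastforce dest: subseq_set_subset)
    with extremal show False by force
  qed
next
  assume no_pair: "\<not> (\<exists>y z. subseq [y, z] xs \<and> (y < x \<and> x < z \<or> z < x \<and> x < y))"
  show "(\<forall>y\<in>set xs. y < x) \<or> (\<forall>y\<in>set xs. x < y)"
  proof (rule ccontr)
    assume "\<not> ?thesis"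
    then obtain y z where yz: "y \<in> set xs" "z \<in> set xs" "\<not> y < x" "\<not> x < z" by auto
    with assms have "x < y" "z < x" by (metis linorder_neqE)+
    with yz subseq_pair_or_swap[of y xs z] no_pair show False by auto
  qed
qed

lemma avoids_213_231_iff_suffix_extremal:
  "distinct \<pi> \<Longrightarrow> avoids \<pi> [2,1,3] \<and> avoids \<pi> [2,3,1] \<longleftrightarrow> suffix_extremal \<pi>"
proof (induction \<pi>)
  case Nil
  show ?case unfolding avoids_def contains_213_iff contains_231_iff by simp
next
  case (Cons x xs)
  have "avoids (x # xs) [2,1,3] \<and> avoids (x # xs) [2,3,1] \<longleftrightarrow>
      (avoids xs [2,1,3] \<and> avoids xs [2,3,1]) \<and>
      \<not> (\<exists>y z. subseq [y, z] xs \<and> (y < x \<and> x < z \<or> z < x \<and> x < y))"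
    unfolding avoids_def contains_213_iff contains_231_iff subseq_triple_Cons by blast
  with Cons extremal_iff_no_straddling_pair[of x xs] show ?case by auto
qed

lemma card_less_Suc_split:
  "card {i. i < Suc m \<and> Q i} = (if Q 0 then 1 else 0) + card {i. i < m \<and> Q (Suc i)}"
proof -
  have "{i. i < Suc m \<and> Q i} = (if Q 0 then {0} else {}) \<union> Suc ` {i. i < m \<and> Q (Suc i)}"
    by (auto simp: image_iff less_Suc_eq_0_disj)
  moreover have "card (Suc ` {i. i < m \<and> Q (Suc i)}) = card {i. i < m \<and> Q (Suc i)}"
    by (rule card_image) simp
  ultimately show ?thesis
    by (simp add: card_Un_disjoint)
qed

lemma ball_set_drop_Suc_conv_nth:
  "(\<forall>y\<in>set (drop (Suc i) xs). P y) \<longleftrightarrow> (\<forall>j. i < j \<and> j < length xs \<longrightarrow> P (xs ! j))"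
proof -
  have "(\<forall>y\<in>set (drop (Suc i) xs). P y) \<longleftrightarrow> (\<forall>k < length xs - Suc i. P (xs ! (Suc i + k)))"
    by (simp add: all_set_conv_all_nth)
  also have "\<dots> \<longleftrightarrow> (\<forall>j. i < j \<and> j < length xs \<longrightarrow> P (xs ! j))"
  proof (intro iffI allI impI)
    fix j assume "\<forall>k < length xs - Suc i. P (xs ! (Suc i + k))" "i < j \<and> j < length xs"
    then show "P (xs ! j)" by (metis Suc_le_eq add_diff_inverse_nat diff_less_mono not_less)
  qed simp
  finally show ?thesis .
qed

lemma asc_Cons_Cons: "asc (x # y # \<tau>) = (if x < y then 1 else 0) + asc (y # \<tau>)"
  unfolding asc_def by (simp add: card_less_Suc_split del: nth_Cons_Suc)

lemma des_Cons_Cons: "des (x # y # \<tau>) = (if y < x then 1 else 0) + des (y # \<tau>)"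
  unfolding des_def by (simp add: card_less_Suc_split del: nth_Cons_Suc)

lemma lrmax_Cons:
  "lrmax (x # \<sigma>) = Suc (card {i. i < length \<sigma> \<and> x < \<sigma>!i \<and> (\<forall>j<i. \<sigma>!j < \<sigma>!i)})"
  unfolding lrmax_def by (simp add: card_less_Suc_split All_less_Suc2)

lemma lrmin_Cons:
  "lrmin (x # \<sigma>) = Suc (card {i. i < length \<sigma> \<and> \<sigma>!i < x \<and> (\<forall>j<i. \<sigma>!i < \<sigma>!j)})"
  unfolding lrmin_def by (simp add: card_less_Suc_split All_less_Suc2)

lemma rlmax_Cons: "rlmax (x # \<sigma>) = (if \<forall>y\<in>set \<sigma>. y < x then 1 else 0) + rlmax \<sigma>"
proof -
  have "rlmax \<pi> = card {i. i < length \<pi> \<and> (\<forall>y\<in>set (drop (Suc i) \<pi>). y < \<pi>!i)}" for \<pi>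
    by (simp add: rlmax_def ball_set_drop_Suc_conv_nth)
  then show ?thesis by (simp add: card_less_Suc_split)
qed

lemma rlmin_Cons: "rlmin (x # \<sigma>) = (if \<forall>y\<in>set \<sigma>. x < y then 1 else 0) + rlmin \<sigma>"
proof -
  have "rlmin \<pi> = card {i. i < length \<pi> \<and> (\<forall>y\<in>set (drop (Suc i) \<pi>). \<pi>!i < y)}" for \<pi>
    by (simp add: rlmin_def ball_set_drop_Suc_conv_nth)
  then show ?thesis by (simp add: card_less_Suc_split)
qed

definition stat_weight ::
    "'a::comm_semiring_1 \<Rightarrow> 'a \<Rightarrow> 'a \<Rightarrow> 'a \<Rightarrow> 'a \<Rightarrow> 'a \<Rightarrow> nat list \<Rightarrow> 'a" where
  "stat_weight p q u v s t \<pi> =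
     p ^ asc \<pi> * q ^ des \<pi> * u ^ lrmax \<pi> * v ^ rlmax \<pi> * s ^ lrmin \<pi> * t ^ rlmin \<pi>"

lemma stat_weight_Nil: "stat_weight p q u v s t [] = 1"
  by (simp add: stat_weight_def asc_def des_def lrmax_def rlmax_def lrmin_def rlmin_def)

lemma stat_weight_singleton: "stat_weight p q u v s t [x] = u * v * s * t"
  by (simp add: stat_weight_def asc_def des_def lrmax_Cons lrmin_Cons rlmax_Cons rlmin_Cons
      rlmax_def rlmin_def)

lemma stat_weight_Cons_greater:
  assumes "\<sigma> \<noteq> []" "\<forall>y\<in>set \<sigma>. y < x"
  shows "stat_weight p q u v s t (x # \<sigma>) = q * u * v * s * stat_weight p q 1 v s t \<sigma>"
proof -
  obtain y \<tau> where \<sigma>: "\<sigma> = y # \<tau>" and "y < x"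
    using assms by (cases \<sigma>) auto
  then have "asc (x # \<sigma>) = asc \<sigma>" "des (x # \<sigma>) = Suc (des \<sigma>)"
    by (simp_all add: asc_Cons_Cons des_Cons_Cons)
  moreover have "lrmax (x # \<sigma>) = 1"
    using assms(2) by (auto simp: lrmax_Cons dest: less_asym)
  moreover have "lrmin (x # \<sigma>) = Suc (lrmin \<sigma>)"
    using assms(2) by (auto simp: lrmin_Cons lrmin_def[of \<sigma>] intro!: arg_cong[where f = card])
  moreover have "rlmax (x # \<sigma>) = Suc (rlmax \<sigma>)" "rlmin (x # \<sigma>) = rlmin \<sigma>"
    using assms \<open>y < x\<close> by (simp_all add: rlmax_Cons rlmin_Cons \<sigma>)
  ultimately show ?thesis
    by (simp add: stat_weight_def mult_ac)
qed

lemma stat_weight_Cons_less: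
  assumes "\<sigma> \<noteq> []" "\<forall>y\<in>set \<sigma>. x < y"
  shows "stat_weight p q u v s t (x # \<sigma>) = p * u * s * t * stat_weight p q u v 1 t \<sigma>"
proof -
  obtain y \<tau> where \<sigma>: "\<sigma> = y # \<tau>" and "x < y"
    using assms by (cases \<sigma>) auto
  then have "asc (x # \<sigma>) = Suc (asc \<sigma>)" "des (x # \<sigma>) = des \<sigma>"
    by (simp_all add: asc_Cons_Cons des_Cons_Cons)
  moreover have "lrmin (x # \<sigma>) = 1"
    using assms(2) by (auto simp: lrmin_Cons dest: less_asym)
  moreover have "lrmax (x # \<sigma>) = Suc (lrmax \<sigma>)"
    using assms(2) by (auto simp: lrmax_Cons lrmax_def[of \<sigma>] intro!: arg_cong[where f = card])
  moreover have "rlmin (x # \<sigma>) = Suc (rlmin \<sigma>)" "rlmax (x # \<sigma>) = rlmax \<sigma>"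
    using assms \<open>x < y\<close> by (simp_all add: rlmax_Cons rlmin_Cons \<sigma>)
  ultimately show ?thesis
    by (simp add: stat_weight_def mult_ac)
qed

definition extremal_perms :: "nat set \<Rightarrow> nat list set" where
  "extremal_perms S = {\<pi> \<in> permutations_of_set S. suffix_extremal \<pi>}"

lemma finite_extremal_perms: "finite S \<Longrightarrow> finite (extremal_perms S)"
  by (simp add: extremal_perms_def)

lemma extremal_perms_empty: "extremal_perms {} = {[]}"
  by (auto simp: extremal_perms_def)

lemma extremal_perms_singleton: "extremal_perms {x} = {[x]}"
  by (auto simp: extremal_perms_def)

lemma extremal_perms_nonempty:
  assumes "finite S" "S \<noteq> {}"
  shows "extremal_perms S =
    Cons (Max S) ` extremal_perms (S - {Max S}) \<union> Cons (Min S) ` extremal_perms (S - {Min S})"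
proof -
  have greatest: "(\<forall>y\<in>S - {x}. y < x) \<longleftrightarrow> x = Max S" if "x \<in> S" for x
    using that assms by (auto intro: Max_eqI[symmetric] simp: order.strict_iff_order)
  have least: "(\<forall>y\<in>S - {x}. x < y) \<longleftrightarrow> x = Min S" if "x \<in> S" for x
    using that assms by (auto intro: Min_eqI[symmetric] simp: order.strict_iff_order)
  have "extremal_perms S = (\<Union>x\<in>S. Cons x `
      {xs \<in> permutations_of_set (S - {x}). ((\<forall>y\<in>S - {x}. y < x) \<or> (\<forall>y\<in>S - {x}. x < y)) \<and>
         suffix_extremal xs})"
    unfolding extremal_perms_def permutations_of_set_nonempty[OF assms(2)]
    by (auto simp: permutations_of_set_def)
  also have "\<dots> = Cons (Max S) ` extremal_perms (S - {Max S}) \<union> Cons (Min S) ` extremal_perms (S - {Min S})"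
    using greatest least Max_in[OF assms] Min_in[OF assms] by (auto simp: extremal_perms_def)
  finally show ?thesis .
qed

fun extremal_weight :: "nat \<Rightarrow> 'a::comm_semiring_1 \<Rightarrow> 'a \<Rightarrow> 'a \<Rightarrow> 'a \<Rightarrow> 'a \<Rightarrow> 'a \<Rightarrow> 'a" where
  "extremal_weight 0 p q u v s t = 1"
| "extremal_weight (Suc 0) p q u v s t = u * v * s * t"
| "extremal_weight (Suc (Suc n)) p q u v s t =
     q * u * v * s * extremal_weight (Suc n) p q 1 v s t + p * u * s * t * extremal_weight (Suc n) p q u v 1 t"

lemma sum_Cons_image: "(\<Sum>\<pi>\<in>Cons x ` A. f \<pi>) = (\<Sum>\<sigma>\<in>A. f (x # \<sigma>))"
  by (simp add: sum.reindex)

lemma sum_stat_weight_Cons_Max: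
  assumes "finite S" "S - {Max S} \<noteq> {}"
  shows "(\<Sum>\<sigma>\<in>extremal_perms (S - {Max S}). stat_weight p q u v s t (Max S # \<sigma>)) =
    q * u * v * s * (\<Sum>\<sigma>\<in>extremal_perms (S - {Max S}). stat_weight p q 1 v s t \<sigma>)"
proof -
  have "stat_weight p q u v s t (Max S # \<sigma>) = q * u * v * s * stat_weight p q 1 v s t \<sigma>"
    if "\<sigma> \<in> extremal_perms (S - {Max S})" for \<sigma>
  proof (rule stat_weight_Cons_greater)
    have "set \<sigma> = S - {Max S}"
      using that by (simp add: extremal_perms_def permutations_of_set_def)
    then show "\<sigma> \<noteq> []" "\<forall>y\<in>set \<sigma>. y < Max S"
      using assms(2) Max_ge[OF assms(1)] by (auto simp: order.strict_iff_order)
  qed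
  then show ?thesis
    by (simp add: sum_distrib_left)
qed

lemma sum_stat_weight_Cons_Min:
  assumes "finite S" "S - {Min S} \<noteq> {}"
  shows "(\<Sum>\<sigma>\<in>extremal_perms (S - {Min S}). stat_weight p q u v s t (Min S # \<sigma>)) =
    p * u * s * t * (\<Sum>\<sigma>\<in>extremal_perms (S - {Min S}). stat_weight p q u v 1 t \<sigma>)"
proof -
  have "stat_weight p q u v s t (Min S # \<sigma>) = p * u * s * t * stat_weight p q u v 1 t \<sigma>"
    if "\<sigma> \<in> extremal_perms (S - {Min S})" for \<sigma>
  proof (rule stat_weight_Cons_less)
    have "set \<sigma> = S - {Min S}"
      using that by (simp add: extremal_perms_def permutations_of_set_def)
    then show "\<sigma> \<noteq> []" "\<forall>y\<in>set \<sigma>. Min S < y"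
      using assms(2) Min_le[OF assms(1)] by (auto simp: order.strict_iff_order)
  qed
  then show ?thesis
    by (simp add: sum_distrib_left)
qed

lemma sum_stat_weight_extremal_perms:
  "finite S \<Longrightarrow> card S = n \<Longrightarrow>
     (\<Sum>\<pi>\<in>extremal_perms S. stat_weight p q u v s t \<pi>) = extremal_weight n p q u v s t"
proof (induction n p q u v s t arbitrary: S rule: extremal_weight.induct)
  case (1 p q u v s t)
  then show ?case by (simp add: extremal_perms_empty stat_weight_Nil)
next
  case (2 p q u v s t)
  then obtain x where "S = {x}" by (auto simp: card_Suc_eq)
  then show ?case by (simp add: extremal_perms_singleton stat_weight_singleton)
next
  case (3 n p q u v s t)
  have "S \<noteq> {}" using "3.prems" by auto
  have card_rest: "card (S - {Max S}) = Suc n" "card (S - {Min S}) = Suc n"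
    using "3.prems" \<open>S \<noteq> {}\<close> by simp_all
  then have rest_nonempty: "S - {Max S} \<noteq> {}" "S - {Min S} \<noteq> {}"
    by (metis card.empty Zero_not_Suc)+
  have "Min S < Max S"
  proof -
    obtain b where b: "b \<in> S - {Max S}" using rest_nonempty(1) by blast
    then have "Min S \<le> b" using "3.prems"(1) by simp
    also have "b < Max S" using b "3.prems"(1) by (simp add: order.strict_iff_order)
    finally show ?thesis .
  qed
  then have "Cons (Max S) ` extremal_perms (S - {Max S}) \<inter> Cons (Min S) ` extremal_perms (S - {Min S}) = {}"
    by auto
  then show ?case
    using "3.prems"(1) rest_nonempty "3.IH"(1)[OF _ card_rest(1)] "3.IH"(2)[OF _ card_rest(2)]
    by (simp add: extremal_perms_nonempty[OF "3.prems"(1) \<open>S \<noteq> {}\<close>] sum.union_disjoint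
        finite_extremal_perms sum_Cons_image sum_stat_weight_Cons_Max sum_stat_weight_Cons_Min)
qed

lemma Av2_213_231_eq_extremal_perms: "Av2 n [2,1,3] [2,3,1] = extremal_perms {1..n}"
  unfolding Av2_def extremal_perms_def
  using avoids_213_231_iff_suffix_extremal by (auto simp: permutations_of_set_def)

lemma extremal_weight_fps_equation:
  fixes p q u v s t :: "'a::comm_ring_1"
  shows "Abs_fps (\<lambda>n. extremal_weight n p q u v s t) - 1 =
    fps_const (u * v * s * t) * fps_X
      + fps_X * (fps_const (q * u * v * s) * (Abs_fps (\<lambda>n. extremal_weight n p q 1 v s t) - 1)
               + fps_const (p * u * s * t) * (Abs_fps (\<lambda>n. extremal_weight n p q u v 1 t) - 1))"
    (is "?F = ?G")
proof (rule fps_ext)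
  fix n
  show "fps_nth ?F n = fps_nth ?G n"
  proof (cases n)
    case (Suc m)
    then show ?thesis by (cases m) (simp_all add: fps_X_mult_nth)
  qed simp
qed

(* A, B, C, E play the roles of F(1,1) - 1, F(1,s) - 1, F(u,1) - 1, F(u,s) - 1, the capitals
   P, ..., T those of the constant series p, ..., t, and X that of x. *)
lemma gf_system_elimination:
  fixes P Q U V S T X A B C E :: "'b::comm_ring_1"
  assumes A: "A = V*T*X + X*(Q*V*A + P*T*A)"
      and B: "B = V*S*T*X + X*(Q*V*S*B + P*S*T*A)"
      and C: "C = U*V*T*X + X*(Q*U*V*A + P*U*T*C)"
      and E: "E = U*V*S*T*X + X*(Q*U*V*S*B + P*U*S*T*C)"
  shows "(1 + E) * ((1 - P*T*U * X) * (1 - P*T * X - Q*V * X) * (1 - Q*S*V * X)) =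
     1 - P*T * X - P*T*U * X - Q*V * X
        - Q*S*V * X + S*T*U*V * X
        + P^2*T^2*U * X^2 + P*Q*S*T*V * X^2
        + P*Q*T*U*V * X^2 + P*Q*S*T*U*V * X^2
        - P*S*T^2*U*V * X^2 + Q^2*S*V^2 * X^2
        - Q*S*T*U*V^2 * X^2
        - P^2*Q*S*T^2*U*V * X^3 - P*Q^2*S*T*U*V^2 * X^3
        + P*Q*S^2*T^2*U*V^2 * X^3 + P*Q*S*T^2*U^2*V^2 * X^3
        - P*Q*S^2*T^2*U^2*V^2 * X^3"
proof -
  let ?a = "1 - P*T*U*X" and ?b = "1 - P*T*X - Q*V*X" and ?c = "1 - Q*S*V*X"
  have A': "A * ?b = V*T*X"
  proof -
    have "A * ?b = A - X*(Q*V*A + P*T*A)" by (simp add: algebra_simps)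
    then show ?thesis using A by (metis add_diff_cancel_right')
  qed
  have B': "B * ?c = V*S*T*X + P*S*T*X*A"
  proof -
    have "B * ?c = B - X*(Q*V*S*B)" by (simp add: algebra_simps)
    then show ?thesis using B by (simp add: algebra_simps)
  qed
  have C': "C * ?a = U*V*T*X + Q*U*V*X*A"
  proof -
    have "C * ?a = C - X*(P*U*T*C)" by (simp add: algebra_simps)
    then show ?thesis using C by (simp add: algebra_simps)
  qed
  have "(1 + E) * (?a * ?b * ?c) = ?a * ?b * ?c + U*V*S*T*X * (?a * ?b * ?c)
      + Q*U*V*S*X * ?a * ?b * (B * ?c) + P*U*S*T*X * ?c * ?b * (C * ?a)"
    unfolding E by (simp add: algebra_simps)
  also have "\<dots> = ?a * ?b * ?c + U*V*S*T*X * (?a * ?b * ?c)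
      + Q*U*V*S*X * ?a * (V*S*T*X * ?b + P*S*T*X * (A * ?b))
      + P*U*S*T*X * ?c * (U*V*T*X * ?b + Q*U*V*X * (A * ?b))"
    unfolding B' C' by (simp add: algebra_simps)
  also have "\<dots> = 1 - P*T * X - P*T*U * X - Q*V * X
        - Q*S*V * X + S*T*U*V * X
        + P^2*T^2*U * X^2 + P*Q*S*T*V * X^2
        + P*Q*T*U*V * X^2 + P*Q*S*T*U*V * X^2
        - P*S*T^2*U*V * X^2 + Q^2*S*V^2 * X^2
        - Q*S*T*U*V^2 * X^2
        - P^2*Q*S*T^2*U*V * X^3 - P*Q^2*S*T*U*V^2 * X^3
        + P*Q*S^2*T^2*U*V^2 * X^3 + P*Q*S*T^2*U^2*V^2 * X^3
        - P*Q*S^2*T^2*U^2*V^2 * X^3"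
    unfolding A' by (simp add: algebra_simps power2_eq_square power3_eq_cube)
  finally show ?thesis .
qed

lemma extremal_weight_fps:
  fixes p q u v s t :: "'a::field"
  shows "Abs_fps (\<lambda>n. extremal_weight n p q u v s t) =
   (1 - fps_const (p*t) * fps_X - fps_const (p*t*u) * fps_X - fps_const (q*v) * fps_X
        - fps_const (q*s*v) * fps_X + fps_const (s*t*u*v) * fps_X
        + fps_const (p^2*t^2*u) * fps_X^2 + fps_const (p*q*s*t*v) * fps_X^2
        + fps_const (p*q*t*u*v) * fps_X^2 + fps_const (p*q*s*t*u*v) * fps_X^2
        - fps_const (p*s*t^2*u*v) * fps_X^2 + fps_const (q^2*s*v^2) * fps_X^2
        - fps_const (q*s*t*u*v^2) * fps_X^2
        - fps_const (p^2*q*s*t^2*u*v) * fps_X^3 - fps_const (p*q^2*s*t*u*v^2) * fps_X^3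
        + fps_const (p*q*s^2*t^2*u*v^2) * fps_X^3 + fps_const (p*q*s*t^2*u^2*v^2) * fps_X^3
        - fps_const (p*q*s^2*t^2*u^2*v^2) * fps_X^3)
     / ((1 - fps_const (p*t*u) * fps_X)
        * (1 - fps_const (p*t) * fps_X - fps_const (q*v) * fps_X)
        * (1 - fps_const (q*s*v) * fps_X))"
    (is "?G = ?N / ?D")
proof -
  note equations = extremal_weight_fps_equation[of p q 1 v 1 t] extremal_weight_fps_equation[of p q 1 v s t]
    extremal_weight_fps_equation[of p q u v 1 t] extremal_weight_fps_equation[of p q u v s t]
  have "?G * ?D = ?N"
    using gf_system_elimination[OF equations[unfolded mult_1_left mult_1_right fps_const_mult[symmetric]]]
    by (simp only: add_diff_eq add_diff_cancel_left' fps_const_mult[symmetric] fps_const_power[symmetric])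
  moreover have "fps_nth ?D 0 \<noteq> 0"
    by simp
  then have "?D \<noteq> 0"
    by (metis fps_zero_nth)
  ultimately show ?thesis
    by (metis nonzero_mult_div_cancel_right)
qed

theorem theorem9:
  fixes p q u v s t :: "'a :: field"
  shows
  "Abs_fps (\<lambda>n. \<Sum>\<pi>\<in>Av2 n [2,1,3] [2,3,1].
        p ^ asc \<pi> * q ^ des \<pi> * u ^ lrmax \<pi> * v ^ rlmax \<pi> * s ^ lrmin \<pi> * t ^ rlmin \<pi>)
   = (1 - fps_const (p*t) * fps_X - fps_const (p*t*u) * fps_X - fps_const (q*v) * fps_X
        - fps_const (q*s*v) * fps_X + fps_const (s*t*u*v) * fps_X
        + fps_const (p^2*t^2*u) * fps_X^2 + fps_const (p*q*s*t*v) * fps_X^2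
        + fps_const (p*q*t*u*v) * fps_X^2 + fps_const (p*q*s*t*u*v) * fps_X^2
        - fps_const (p*s*t^2*u*v) * fps_X^2 + fps_const (q^2*s*v^2) * fps_X^2
        - fps_const (q*s*t*u*v^2) * fps_X^2
        - fps_const (p^2*q*s*t^2*u*v) * fps_X^3 - fps_const (p*q^2*s*t*u*v^2) * fps_X^3
        + fps_const (p*q*s^2*t^2*u*v^2) * fps_X^3 + fps_const (p*q*s*t^2*u^2*v^2) * fps_X^3
        - fps_const (p*q*s^2*t^2*u^2*v^2) * fps_X^3)
     / ((1 - fps_const (p*t*u) * fps_X)
        * (1 - fps_const (p*t) * fps_X - fps_const (q*v) * fps_X)
        * (1 - fps_const (q*s*v) * fps_X))"
proof -
  have "(\<Sum>\<pi>\<in>Av2 n [2,1,3] [2,3,1].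
        p ^ asc \<pi> * q ^ des \<pi> * u ^ lrmax \<pi> * v ^ rlmax \<pi> * s ^ lrmin \<pi> * t ^ rlmin \<pi>)
      = extremal_weight n p q u v s t" for n
    unfolding Av2_213_231_eq_extremal_perms stat_weight_def[symmetric]
    by (rule sum_stat_weight_extremal_perms) simp_all
  then show ?thesis
    by (simp only: extremal_weight_fps)
qed

end
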